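(* Let $Q=\{q(k)\}_{k\ge1}$ be a strictly increasing sequence of positive integers with $q(k+1)/q(k)\to\infty$. Then there exists $\alpha\in(\tfrac13,\tfrac23)$ such that $\{\alpha q(k)\}\to0$ as $k\to\infty$, where $\{x\}$ denotes the fractional part of $x$.
   Context: $\{x\}=x-\lfloor x\rfloor$ denotes the fractional part of a real number $x$. *)

theory Defs
  imports Complex_Main
begin

end

theory Submission
  imports Defs
begin

(*
  After discarding finitely many terms we may assume that
  p n = q (n + K) satisfies p 0 \<ge> 5 and p (n+1) \<ge> 4 p n for all n, while the
  ratios p (n+1) / p n still tend to infinity.  Starting from a rational
  a 0 > 1/3 with denominator p 0, round up step by step:
      a (n+1) = \<lceil>p (n+1) * a n\<rceil> / p (n+1).
  Then a n * p n is an integer, a is increasing, and a (n+1) - a n \<le> 1 / p (n+1).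
  A telescoping estimate for lacunary sequences bounds the total remaining
  increment after step n by 1 / ((R - 1) p n) whenever p grows by a factor R
  from n on.  Hence a converges to some \<alpha> with a n \<le> \<alpha> \<le> a n + 1/((R-1) p n),
  so frac (\<alpha> p n) \<le> 1/(R-1) eventually, for every R > 1; with R = 4 at n = 0
  this also pins \<alpha> inside (1/3, 2/3).
*)

text \<open>If b is a multiple of 1/P and L exceeds b by at most 1/((R-1) P), then
  L P lies just above the integer b P, so frac (L P) \<le> 1/(R-1).\<close>
lemma frac_near_grid_point:
  fixes b L P R :: real
  assumes int: "b * P \<in> \<int>" and P: "P > 0" and R: "R > 2"
    and lo: "b \<le> L" and hi: "L \<le> b + 1 / ((R - 1) * P)"
  shows "frac (L * P) \<le> 1 / (R - 1)"
proof -
  have "L * P \<le> (b + 1 / ((R - 1) * P)) * P" using hi P by simp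
  also have "\<dots> = b * P + 1 / (R - 1)" using P R by (simp add: field_simps)
  finally have above: "L * P - b * P \<le> 1 / (R - 1)" by simp
  have "1 / (R - 1) < 1" using R by simp
  moreover have "b * P \<le> L * P" using lo P by simp
  ultimately have "frac (L * P) = L * P - b * P"
    using int above by (subst frac_unique_iff) auto
  with above show ?thesis by simp
qed

lemma frac_tendsto_zeroI:
  fixes f :: "nat \<Rightarrow> real"
  assumes small: "\<And>R. R > 2 \<Longrightarrow> eventually (\<lambda>n. frac (f n) \<le> 1 / (R - 1)) sequentially"
  shows "(\<lambda>n. frac (f n)) \<longlonglongrightarrow> 0"
proof (rule order_tendstoI)
  fix e :: real assume "e > 0"
  then have "1 / ((2 + 1 / e) - 1) < e" by (simp add: field_simps)
  then show "eventually (\<lambda>n. frac (f n) < e) sequentially"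
    using small[of "2 + 1 / e"] \<open>e > 0\<close> by (auto elim: eventually_mono)
next
  fix e :: real assume "e < 0"
  then show "eventually (\<lambda>n. e < frac (f n)) sequentially"
    by (intro always_eventually allI) (meson frac_ge_0 less_le_trans)
qed

text \<open>One step of the telescoping: if Q grows by the factor R > 1, an increment
  of size 1/Q(j+1) is absorbed by the geometric tail bound.\<close>
lemma lacunary_step:
  fixes R Qj Qs :: real
  assumes R: "R > 1" and pos: "Qj > 0" and grow: "R * Qj \<le> Qs"
  shows "1 / Qs + 1 / ((R - 1) * Qs) \<le> 1 / ((R - 1) * Qj)"
proof -
  have Qs: "Qs > 0" using R pos grow by (smt (verit) mult_pos_pos)
  have "1 / Qs + 1 / ((R - 1) * Qs) = R / ((R - 1) * Qs)"
    using R Qs by (simp add: field_simps)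
  also have "\<dots> \<le> 1 / ((R - 1) * Qj)"
  proof -
    have "0 \<le> (R - 1) * (Qs - R * Qj)" using R grow by simp
    then have "R * (R * Qj) + Qs \<le> R * Qs + R * Qj" by (simp add: algebra_simps)
    then show ?thesis using R Qs pos by (simp add: field_simps)
  qed
  finally show ?thesis .
qed

lemma lacunary_telescope:
  fixes a Q :: "nat \<Rightarrow> real" and R :: real
  assumes R: "R > 1"
    and pos: "\<And>j. k \<le> j \<Longrightarrow> Q j > 0"
    and grow: "\<And>j. k \<le> j \<Longrightarrow> R * Q j \<le> Q (Suc j)"
    and incr: "\<And>j. k \<le> j \<Longrightarrow> a (Suc j) \<le> a j + 1 / Q (Suc j)"
    and "k \<le> m"
  shows "a m + 1 / ((R - 1) * Q m) \<le> a k + 1 / ((R - 1) * Q k)"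
  using \<open>k \<le> m\<close>
proof (induction m rule: dec_induct)
  case base
  then show ?case by simp
next
  case (step m)
  have "1 / Q (Suc m) + 1 / ((R - 1) * Q (Suc m)) \<le> 1 / ((R - 1) * Q m)"
    using lacunary_step[OF R pos grow] step.hyps by simp
  then show ?case using step.IH incr[of m] step.hyps by linarith
qed

lemma lacunary_limit_bound:
  fixes a Q :: "nat \<Rightarrow> real" and R L :: real
  assumes lim: "a \<longlonglongrightarrow> L" and R: "R > 1"
    and pos: "\<And>j. k \<le> j \<Longrightarrow> Q j > 0"
    and grow: "\<And>j. k \<le> j \<Longrightarrow> R * Q j \<le> Q (Suc j)"
    and incr: "\<And>j. k \<le> j \<Longrightarrow> a (Suc j) \<le> a j + 1 / Q (Suc j)"
  shows "L \<le> a k + 1 / ((R - 1) * Q k)"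
proof (rule LIMSEQ_le_const2[OF lim], intro exI allI impI)
  fix m assume "k \<le> m"
  then have "a m + 1 / ((R - 1) * Q m) \<le> a k + 1 / ((R - 1) * Q k)"
    using lacunary_telescope[of R k Q a m, OF R pos grow incr] by blast
  moreover have "0 \<le> 1 / ((R - 1) * Q m)" using R pos[OF \<open>k \<le> m\<close>] by simp
  ultimately show "a m \<le> a k + 1 / ((R - 1) * Q k)" by linarith
qed

primrec round_up :: "(nat \<Rightarrow> nat) \<Rightarrow> real \<Rightarrow> nat \<Rightarrow> real" where
  "round_up p x 0 = x"
| "round_up p x (Suc n) =
     of_int \<lceil>real (p (Suc n)) * round_up p x n\<rceil> / real (p (Suc n))"

lemma round_up_step:
  assumes "p (Suc n) > 0"
  shows "round_up p x n \<le> round_up p x (Suc n)"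
    and "round_up p x (Suc n) \<le> round_up p x n + 1 / real (p (Suc n))"
proof -
  let ?d = "real (p (Suc n))" and ?y = "round_up p x n"
  have d: "?d > 0" using assms by simp
  have "?d * ?y \<le> of_int \<lceil>?d * ?y\<rceil>" "of_int \<lceil>?d * ?y\<rceil> \<le> ?d * ?y + 1"
    by linarith+
  with d show "?y \<le> round_up p x (Suc n)"
    and "round_up p x (Suc n) \<le> ?y + 1 / ?d"
    by (simp_all add: field_simps)
qed

lemma round_up_integral:
  assumes "x * real (p 0) \<in> \<int>" and "p n > 0"
  shows "round_up p x n * real (p n) \<in> \<int>"
  using assms by (cases n) auto

text \<open>The number \<alpha> is the limit of the rounding sequence started just above 1/3.\<close>
lemma lacunary_frac_to_zero:
  fixes p :: "nat \<Rightarrow> nat"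
  assumes p0: "5 \<le> p 0"
    and grow4: "\<And>n. 4 * p n \<le> p (Suc n)"
    and lac: "\<And>R. eventually (\<lambda>n. R * real (p n) \<le> real (p (Suc n))) sequentially"
  shows "\<exists>\<alpha>::real. 1/3 < \<alpha> \<and> \<alpha> < 2/3 \<and> (\<lambda>n. frac (\<alpha> * real (p n))) \<longlonglongrightarrow> 0"
proof -
  have "p n \<le> p (Suc n)" for n using grow4[of n] by linarith
  then have "p 0 \<le> p n" for n by (rule lift_Suc_mono_le) simp
  then have ppos: "real (p n) > 0" for n using p0 by (metis of_nat_0_less_iff le_trans gr0I le0 not_numeral_le_zero)
  have grow4': "4 * real (p n) \<le> real (p (Suc n))" for n using grow4[of n] by linarith
  define x :: real where "x = of_int (\<lfloor>real (p 0) / 3\<rfloor> + 1) / real (p 0)"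
  define a where "a = round_up p x"
  have step: "a n \<le> a (Suc n)" "a (Suc n) \<le> a n + 1 / real (p (Suc n))" for n
    using round_up_step[of p n x] ppos[of "Suc n"] by (simp_all add: a_def)
  have x_bounds: "1/3 < x" "x \<le> 1/3 + 1 / real (p 0)"
  proof -
    let ?f = "\<lfloor>real (p 0) / 3\<rfloor>"
    have "real (p 0) / 3 < of_int ?f + 1" "of_int ?f \<le> real (p 0) / 3" by linarith+
    with ppos[of 0] show "1/3 < x" "x \<le> 1/3 + 1 / real (p 0)"
      unfolding x_def by (simp_all add: field_simps)
  qed
  have bounded: "a n \<le> a 0 + 1 / ((4 - 1) * real (p 0))" for n
  proof -
    have "a n + 1 / ((4 - 1) * real (p n)) \<le> a 0 + 1 / ((4 - 1) * real (p 0))"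
      by (rule lacunary_telescope[where Q = "\<lambda>j. real (p j)"]) (use ppos grow4' step(2) in auto)
    moreover have "0 \<le> 1 / ((4 - 1) * real (p n))" using ppos[of n] by simp
    ultimately show ?thesis by linarith
  qed
  moreover have "incseq a" using step(1) by (rule incseq_SucI)
  ultimately obtain L where lim: "a \<longlonglongrightarrow> L" and below: "\<And>n. a n \<le> L"
    using incseq_convergent[of a "a 0 + 1 / ((4 - 1) * real (p 0))"] by blast
  have above: "L \<le> a n + 1 / ((R - 1) * real (p n))"
    if "R > 1" "\<And>j. n \<le> j \<Longrightarrow> R * real (p j) \<le> real (p (Suc j))" for R n
    using lacunary_limit_bound[OF lim that(1), of n "\<lambda>j. real (p j)"] ppos that(2) step(2) by blast
  have frac_small: "eventually (\<lambda>n. frac (L * real (p n)) \<le> 1 / (R - 1)) sequentially"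
    if R: "R > 2" for R
  proof -
    obtain N where N: "\<And>j. N \<le> j \<Longrightarrow> R * real (p j) \<le> real (p (Suc j))"
      using lac[of R] by (auto simp: eventually_sequentially)
    have "frac (L * real (p n)) \<le> 1 / (R - 1)" if "N \<le> n" for n
    proof (rule frac_near_grid_point[OF _ ppos R below])
      show "a n * real (p n) \<in> \<int>"
        using round_up_integral[of x p n] ppos[of 0] ppos[of n] unfolding a_def x_def by simp
      show "L \<le> a n + 1 / ((R - 1) * real (p n))" using above[of R n] R N that by simp
    qed
    then show ?thesis by (auto simp: eventually_sequentially)
  qed
  show ?thesis
  proof (intro exI conjI)
    show "1/3 < L" using below[of 0] x_bounds by (simp add: a_def)
    have "L \<le> x + 1 / ((4 - 1) * real (p 0))"
      using above[of 4 0] grow4' by (simp add: a_def)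
    moreover have "1 / real (p 0) + 1 / (3 * real (p 0)) < 1/3"
      using p0 by (simp add: field_simps)
    ultimately show "L < 2/3" using x_bounds by simp
    show "(\<lambda>n. frac (L * real (p n))) \<longlonglongrightarrow> 0"
      using frac_small by (rule frac_tendsto_zeroI)
  qed
qed

lemma ratio_eventually_ge:
  fixes q :: "nat \<Rightarrow> nat"
  assumes pos: "eventually (\<lambda>k. q k > 0) sequentially"
    and ratio: "filterlim (\<lambda>k. real (q (Suc k)) / real (q k)) at_top sequentially"
  shows "eventually (\<lambda>k. R * real (q k) \<le> real (q (Suc k))) sequentially"
proof -
  have "eventually (\<lambda>k. R \<le> real (q (Suc k)) / real (q k)) sequentially"
    using ratio by (simp add: filterlim_at_top)
  with pos show ?thesis by eventually_elim (simp add: pos_le_divide_eq)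
qed

text \<open>A strictly increasing sequence of positive integers indexed from 1
  satisfies q k \<ge> k; it is used to make the first retained term large.\<close>
lemma strictly_increasing_ge_index:
  fixes q :: "nat \<Rightarrow> nat"
  assumes pos: "\<And>k. k \<ge> 1 \<Longrightarrow> q k > 0"
    and incr: "\<And>k. k \<ge> 1 \<Longrightarrow> q k < q (Suc k)"
    and "1 \<le> k"
  shows "k \<le> q k"
  using \<open>1 \<le> k\<close>
proof (induction k rule: dec_induct)
  case base
  then show ?case using pos[of 1] by simp
next
  case (step k)
  then show ?case using incr[of k] by simp
qed

theorem lemma3:
  fixes q :: "nat \<Rightarrow> nat"
  assumes pos: "\<And>k. k \<ge> 1 \<Longrightarrow> q k > 0"
    and incr: "\<And>k. k \<ge> 1 \<Longrightarrow> q k < q (Suc k)"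
    and ratio: "filterlim (\<lambda>k. real (q (Suc k)) / real (q k)) at_top sequentially"
  shows "\<exists>\<alpha>::real. 1/3 < \<alpha> \<and> \<alpha> < 2/3 \<and>
           (\<lambda>k. frac (\<alpha> * real (q k))) \<longlonglongrightarrow> 0"
proof -
  have "eventually (\<lambda>k. q k > 0) sequentially"
    using pos by (auto simp: eventually_sequentially)
  then have lac: "eventually (\<lambda>k. R * real (q k) \<le> real (q (Suc k))) sequentially" for R
    using ratio_eventually_ge ratio by blast
  obtain K where K5: "5 \<le> K" and K4: "\<And>j. K \<le> j \<Longrightarrow> 4 * real (q j) \<le> real (q (Suc j))"
    using lac[of 4] unfolding eventually_sequentially by (metis max.cobounded1 max.cobounded2 le_trans)
  define p where "p n = q (n + K)" for n
  have "5 \<le> p 0" using strictly_increasing_ge_index[of q K, OF pos incr] K5 by (simp add: p_def)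
  moreover have "4 * p n \<le> p (Suc n)" for n using K4[of "n + K"] by (simp add: p_def)
  moreover have "eventually (\<lambda>n. R * real (p n) \<le> real (p (Suc n))) sequentially" for R
    using lac[of R] eventually_sequentially_seg[of "\<lambda>k. R * real (q k) \<le> real (q (Suc k))" K]
    by (simp add: p_def)
  ultimately obtain \<alpha> :: real where "1/3 < \<alpha>" "\<alpha> < 2/3"
    and shifted: "(\<lambda>n. frac (\<alpha> * real (q (n + K)))) \<longlonglongrightarrow> 0"
    using lacunary_frac_to_zero[of p] unfolding p_def by blast
  moreover have "(\<lambda>k. frac (\<alpha> * real (q k))) \<longlonglongrightarrow> 0"
    using LIMSEQ_offset[OF shifted] .
  ultimately show ?thesis by blast
qed

end
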